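(* For every integer $p\ge 2$, the loop $C_p$ is topolinear, i.e., its graph $\{(u,v,w)\in Q_{2p}^3: w=u\ast v\}$ is a topolinear set.
   Context: Let $Q_{2p}=\{x_\zeta : x\in\mathbb{Z}_p,\ \zeta\in\{0,1\}\}$. The loop $C_p$ is the operation on $Q_{2p}$ given by $x_\zeta\ast y_\xi=((-1)^\xi x+y+\zeta\xi)_{\zeta\oplus\xi}$, with subscripts modulo $2$ and the rest modulo $p$. An isotopism of $Q_{2p}^3$ is a map $(u,v,w)\mapsto(\tau_1u,\tau_2v,\tau_3w)$ with $\tau_i$ permutations of $Q_{2p}$; a set $A$ is topolinear if the group of isotopisms mapping $A$ onto $A$ contains a subgroup of cardinality $|A|$ acting transitively on $A$. *)

theory Defs
  imports "HOL-Combinatorics.Permutations"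
begin

text \<open>Elements x_zeta of Q_2p are represented as pairs (x, zeta) of integers
  with 0 <= x < p and zeta in {0,1}.\<close>

type_synonym elt = "int \<times> int"

definition Qset :: "int \<Rightarrow> elt set" where
  "Qset p = {0..<p} \<times> {0..<2}"

definition Cop :: "int \<Rightarrow> elt \<Rightarrow> elt \<Rightarrow> elt" where
  "Cop p u v = (case u of (x, z) \<Rightarrow> case v of (y, w) \<Rightarrow>
      (((-1) ^ nat w * x + y + z * w) mod p, (z + w) mod 2))"

definition loop_graph :: "int \<Rightarrow> (elt \<times> elt \<times> elt) set" where
  "loop_graph p = {(u, v, w). u \<in> Qset p \<and> v \<in> Qset p \<and> w = Cop p u v}"

type_synonym 'a iso = "('a \<Rightarrow> 'a) \<times> ('a \<Rightarrow> 'a) \<times> ('a \<Rightarrow> 'a)"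

definition is_isotopism :: "'a set \<Rightarrow> 'a iso \<Rightarrow> bool" where
  "is_isotopism Q t = (case t of (t1, t2, t3) \<Rightarrow>
      t1 permutes Q \<and> t2 permutes Q \<and> t3 permutes Q)"

definition iso_apply :: "'a iso \<Rightarrow> 'a \<times> 'a \<times> 'a \<Rightarrow> 'a \<times> 'a \<times> 'a" where
  "iso_apply t a = (case t of (t1, t2, t3) \<Rightarrow> case a of (u, v, w) \<Rightarrow> (t1 u, t2 v, t3 w))"

definition iso_comp :: "'a iso \<Rightarrow> 'a iso \<Rightarrow> 'a iso" where
  "iso_comp s t = (case s of (s1, s2, s3) \<Rightarrow> case t of (t1, t2, t3) \<Rightarrow>
      (s1 \<circ> t1, s2 \<circ> t2, s3 \<circ> t3))"

definition iso_inv :: "'a iso \<Rightarrow> 'a iso" where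
  "iso_inv t = (case t of (t1, t2, t3) \<Rightarrow> (inv t1, inv t2, inv t3))"

definition autotopies :: "'a set \<Rightarrow> ('a \<times> 'a \<times> 'a) set \<Rightarrow> 'a iso set" where
  "autotopies Q A = {t. is_isotopism Q t \<and> iso_apply t ` A = A}"

definition topolinear :: "'a set \<Rightarrow> ('a \<times> 'a \<times> 'a) set \<Rightarrow> bool" where
  "topolinear Q A = (\<exists>H. H \<subseteq> autotopies Q A
      \<and> (id, id, id) \<in> H
      \<and> (\<forall>s\<in>H. \<forall>t\<in>H. iso_comp s t \<in> H)
      \<and> (\<forall>t\<in>H. iso_inv t \<in> H)
      \<and> finite H \<and> card H = card A
      \<and> (\<forall>a\<in>A. \<forall>b\<in>A. \<exists>h\<in>H. iso_apply h a = b))"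

end

theory Submission
  imports Defs
begin

(* For (s, t, a, k) in {0,1}^2 x Z_p^2 there is an explicit autotopy of C_p, affine in the
   integer coordinates, whose first two components send 0_0 to a_s and to (k - (-1)^t a)_t.
   These 4p^2 autotopies are closed under composition and inversion, and their orbit through
   (0_0, 0_0, 0_0) is the whole graph, which also has 4p^2 elements.  So they form a group
   acting regularly on the graph, which is exactly what topolinearity asks for. *)

lemma iso_apply_comp: "iso_apply (iso_comp s t) x = iso_apply s (iso_apply t x)"
  by (auto simp: iso_apply_def iso_comp_def split: prod.splits)

lemma iso_apply_inv_cancel:
  assumes "is_isotopism Q t"
  shows "iso_apply (iso_inv t) (iso_apply t x) = x"
  using assms
  by (auto simp: is_isotopism_def iso_apply_def iso_inv_def permutes_inverses(2)
      split: prod.splits)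

lemma autotopy_if_maps_into:
  assumes "is_isotopism Q t" "finite A" "iso_apply t ` A \<subseteq> A"
  shows "t \<in> autotopies Q A"
proof -
  have "inj_on (iso_apply t) A"
    by (rule inj_on_inverseI[where g = "iso_apply (iso_inv t)"])
      (rule iso_apply_inv_cancel[OF assms(1)])
  then show ?thesis
    using assms endo_inj_surj by (simp add: autotopies_def)
qed

lemma topolinear_if_regular:
  assumes sub: "H \<subseteq> autotopies Q A"
    and unit: "(id, id, id) \<in> H"
    and comp: "\<forall>s\<in>H. \<forall>t\<in>H. iso_comp s t \<in> H"
    and inv: "\<forall>t\<in>H. iso_inv t \<in> H"
    and fin: "finite A"
    and orbit: "bij_betw (\<lambda>h. iso_apply h a0) H A"
  shows "topolinear Q A"
  unfolding topolinear_def
proof (intro exI conjI ballI)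
  show "finite H" using orbit fin bij_betw_finite by blast
  show "card H = card A" using orbit by (rule bij_betw_same_card)
  fix a b assume "a \<in> A" "b \<in> A"
  then obtain g h where g: "g \<in> H" "iso_apply g a0 = a" and h: "h \<in> H" "iso_apply h a0 = b"
    using orbit by (auto simp: bij_betw_def)
  have "is_isotopism Q g" using g(1) sub by (auto simp: autotopies_def)
  then have "iso_apply (iso_comp h (iso_inv g)) a = b"
    using g(2) h(2) by (auto simp: iso_apply_comp iso_apply_inv_cancel)
  then show "\<exists>k\<in>H. iso_apply k a = b" using comp inv g(1) h(1) by blast
qed (use assms in auto)

definition extend_id :: "'a set \<Rightarrow> ('a \<Rightarrow> 'a) \<Rightarrow> 'a \<Rightarrow> 'a" where
  "extend_id Q f x = (if x \<in> Q then f x else x)"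

lemma extend_id_comp:
  assumes "g ` Q \<subseteq> Q" "\<And>x. x \<in> Q \<Longrightarrow> f (g x) = h x"
  shows "extend_id Q f \<circ> extend_id Q g = extend_id Q h"
  using assms by (auto simp: extend_id_def fun_eq_iff)

lemma extend_id_permutes:
  assumes "finite Q" "f ` Q \<subseteq> Q" "g ` Q \<subseteq> Q" "\<And>x. x \<in> Q \<Longrightarrow> g (f x) = x"
  shows "extend_id Q f permutes Q" "inv (extend_id Q f) = extend_id Q g"
proof -
  have "f ` Q = Q"
    using assms by (intro endo_inj_surj inj_on_inverseI[where g = g]) auto
  then have "bij_betw (extend_id Q f) Q Q"
    by (simp add: bij_betw_def inj_on_def extend_id_def) (metis assms(4))
  then show "extend_id Q f permutes Q"
    by (rule bij_imp_permutes) (simp add: extend_id_def)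
  show "inv (extend_id Q f) = extend_id Q g"
  proof (rule inv_equality)
    show "extend_id Q g (extend_id Q f x) = x" for x
      using assms(2,4) by (auto simp: extend_id_def)
    show "extend_id Q f (extend_id Q g y) = y" for y
      using assms(3,4) \<open>f ` Q = Q\<close> by (auto simp: extend_id_def) (metis imageE)
  qed
qed

definition sgn_bit :: "int \<Rightarrow> int" where
  "sgn_bit n = (if even n then 1 else -1)"

lemma bit_cases: "(s::int) \<in> {0..<2} \<Longrightarrow> s = 0 \<or> s = 1"
  by auto

lemma sgn_bit_add: "sgn_bit (m + n) = sgn_bit m * sgn_bit n"
  by (simp add: sgn_bit_def)

lemma sgn_bit_mod2: "sgn_bit (n mod 2) = sgn_bit n"
  by (simp add: sgn_bit_def)

type_synonym param = "int \<times> int \<times> int \<times> int"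

definition Params :: "int \<Rightarrow> param set" where
  "Params p = {0..<2} \<times> {0..<2} \<times> {0..<p} \<times> {0..<p}"

definition tau1 :: "int \<Rightarrow> param \<Rightarrow> elt \<Rightarrow> elt" where
  "tau1 p i u = (case i of (s, t, a, k) \<Rightarrow> case u of (x, z) \<Rightarrow>
     ((sgn_bit (s + t) * x + a) mod p, (z + s) mod 2))"

definition tau2 :: "int \<Rightarrow> param \<Rightarrow> elt \<Rightarrow> elt" where
  "tau2 p i v = (case i of (s, t, a, k) \<Rightarrow> case v of (y, w) \<Rightarrow>
     ((sgn_bit s * y + k - sgn_bit (t + w) * a + (t - s) * w) mod p, (w + t) mod 2))"

definition tau3 :: "int \<Rightarrow> param \<Rightarrow> elt \<Rightarrow> elt" where
  "tau3 p i v = (case i of (s, t, a, k) \<Rightarrow> case v of (y, e) \<Rightarrow>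
     ((sgn_bit s * y + k + t * ((e + s) mod 2)) mod p, (e + s + t) mod 2))"

definition param_mul :: "int \<Rightarrow> param \<Rightarrow> param \<Rightarrow> param" where
  "param_mul p i j = (case i of (s, t, a, k) \<Rightarrow> case j of (s', t', a', k') \<Rightarrow>
     ((s + s') mod 2, (t + t') mod 2, (sgn_bit (s + t) * a' + a) mod p,
      (k + sgn_bit s * k' + sgn_bit s * t' * s + t * t') mod p))"

definition param_inv :: "int \<Rightarrow> param \<Rightarrow> param" where
  "param_inv p i = (case i of (s, t, a, k) \<Rightarrow>
     (s, t, (- sgn_bit (s + t) * a) mod p, (- sgn_bit s * k - t * s - sgn_bit s * t) mod p))"

(* In the identities below, congruences mod p become divisibilities and every x mod p is
   rewritten to x - (x div p) * p, which leaves a ring identity. *)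

lemma tau1_comp:
  "tau1 p i (tau1 p j q) = tau1 p (param_mul p i j) q"
  unfolding tau1_def param_mul_def
  by (auto simp: sgn_bit_add sgn_bit_mod2 mod_simps split: prod.splits;
      simp only: mod_eq_dvd_iff; simp add: minus_div_mult_eq_mod[symmetric] algebra_simps)

lemma tau2_comp:
  assumes "s \<in> {0..<2}" "t \<in> {0..<2}" "s' \<in> {0..<2}" "t' \<in> {0..<2}" "w \<in> {0..<2}"
  shows "tau2 p (s, t, a, k) (tau2 p (s', t', a', k') (y, w))
    = tau2 p (param_mul p (s, t, a, k) (s', t', a', k')) (y, w)"
  using assms[THEN bit_cases]
  unfolding tau2_def param_mul_def
  by (elim disjE; simp add: sgn_bit_def; simp only: mod_eq_dvd_iff;
      simp add: minus_div_mult_eq_mod[symmetric] algebra_simps)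

lemma tau3_comp:
  assumes "s \<in> {0..<2}" "t \<in> {0..<2}" "s' \<in> {0..<2}" "t' \<in> {0..<2}" "w \<in> {0..<2}"
  shows "tau3 p (s, t, a, k) (tau3 p (s', t', a', k') (y, w))
    = tau3 p (param_mul p (s, t, a, k) (s', t', a', k')) (y, w)"
  using assms[THEN bit_cases]
  unfolding tau3_def param_mul_def
  by (elim disjE; simp add: sgn_bit_def; simp only: mod_eq_dvd_iff;
      simp add: minus_div_mult_eq_mod[symmetric] algebra_simps)

lemma tau_Qset:
  assumes "0 < p" "q \<in> Qset p"
  shows "tau1 p i q \<in> Qset p" "tau2 p i q \<in> Qset p" "tau3 p i q \<in> Qset p"
  using assms by (auto simp: Qset_def tau1_def tau2_def tau3_def split: prod.splits)

lemma Cop_Qset: "0 < p \<Longrightarrow> Cop p u v \<in> Qset p"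
  by (auto simp: Qset_def Cop_def split: prod.splits)

lemma param_mul_Params: "0 < p \<Longrightarrow> param_mul p i j \<in> Params p"
  by (auto simp: Params_def param_mul_def split: prod.splits)

lemma param_inv_Params: "0 < p \<Longrightarrow> i \<in> Params p \<Longrightarrow> param_inv p i \<in> Params p"
  by (auto simp: Params_def param_inv_def)

lemma param_inv_mul:
  assumes "i \<in> Params p"
  shows "param_mul p (param_inv p i) i = (0, 0, 0, 0)"
proof -
  obtain s t a k where i: "i = (s, t, a, k)"
    by (cases i) auto
  have "s = 0 \<or> s = 1" "t = 0 \<or> t = 1"
    using assms by (auto simp: i Params_def)
  then show ?thesis
    unfolding i
    by (elim disjE; simp add: param_mul_def param_inv_def sgn_bit_def;
        simp add: minus_div_mult_eq_mod[symmetric] algebra_simps)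
qed

lemma tau_comp_Qset:
  assumes "i \<in> Params p" "j \<in> Params p" "q \<in> Qset p"
  shows "tau1 p i (tau1 p j q) = tau1 p (param_mul p i j) q"
    "tau2 p i (tau2 p j q) = tau2 p (param_mul p i j) q"
    "tau3 p i (tau3 p j q) = tau3 p (param_mul p i j) q"
  using assms tau1_comp tau2_comp tau3_comp
  by (cases i, cases j, cases q; auto simp: Params_def Qset_def)+

lemma tau_unit_Qset:
  assumes "q \<in> Qset p"
  shows "tau1 p (0, 0, 0, 0) q = q" "tau2 p (0, 0, 0, 0) q = q" "tau3 p (0, 0, 0, 0) q = q"
  using assms by (auto simp: Qset_def tau1_def tau2_def tau3_def sgn_bit_def)

lemma tau_Cop:
  assumes "i \<in> Params p" "u \<in> Qset p" "v \<in> Qset p"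
  shows "tau3 p i (Cop p u v) = Cop p (tau1 p i u) (tau2 p i v)"
proof -
  obtain s t a k x z y w where iuv: "i = (s, t, a, k)" "u = (x, z)" "v = (y, w)"
    by (cases i, cases u, cases v) auto
  have "s = 0 \<or> s = 1" "t = 0 \<or> t = 1" "z = 0 \<or> z = 1" "w = 0 \<or> w = 1"
    using assms by (auto simp: iuv Params_def Qset_def)
  then show ?thesis
    unfolding iuv tau1_def tau2_def tau3_def Cop_def
    by (elim disjE; simp add: sgn_bit_def; simp only: mod_eq_dvd_iff;
        simp add: minus_div_mult_eq_mod[symmetric] algebra_simps)
qed

definition tau :: "int \<Rightarrow> param \<Rightarrow> elt iso" where
  "tau p i = (extend_id (Qset p) (tau1 p i), extend_id (Qset p) (tau2 p i),
              extend_id (Qset p) (tau3 p i))"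

lemma tau_comp:
  assumes "0 < p" "i \<in> Params p" "j \<in> Params p"
  shows "iso_comp (tau p i) (tau p j) = tau p (param_mul p i j)"
  using tau_comp_Qset[OF assms(2,3)] tau_Qset[OF assms(1)]
  by (simp add: iso_comp_def tau_def extend_id_comp image_subsetI)

lemma tau_unit: "tau p (0, 0, 0, 0) = (id, id, id)"
  using tau_unit_Qset by (auto simp: tau_def extend_id_def fun_eq_iff)

lemma tau_isotopism:
  assumes "0 < p" "i \<in> Params p"
  shows "is_isotopism (Qset p) (tau p i)" "iso_inv (tau p i) = tau p (param_inv p i)"
proof -
  have fin: "finite (Qset p)" by (simp add: Qset_def)
  have left_inv: "tau1 p (param_inv p i) (tau1 p i q) = q"
    "tau2 p (param_inv p i) (tau2 p i q) = q" "tau3 p (param_inv p i) (tau3 p i q) = q"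
    if "q \<in> Qset p" for q
    using tau_comp_Qset[OF param_inv_Params[OF assms] assms(2) that]
      param_inv_mul[OF assms(2)] tau_unit_Qset[OF that] by simp_all
  note maps = tau_Qset[OF assms(1)]
  note ext1 = extend_id_permutes[OF fin, of "tau1 p i" "tau1 p (param_inv p i)"]
  note ext2 = extend_id_permutes[OF fin, of "tau2 p i" "tau2 p (param_inv p i)"]
  note ext3 = extend_id_permutes[OF fin, of "tau3 p i" "tau3 p (param_inv p i)"]
  show "is_isotopism (Qset p) (tau p i)" "iso_inv (tau p i) = tau p (param_inv p i)"
    using ext1 ext2 ext3 maps left_inv
    by (auto simp: is_isotopism_def iso_inv_def tau_def image_subsetI)
qed

lemma loop_graph_eq_image: "loop_graph p = (\<lambda>(u, v). (u, v, Cop p u v)) ` (Qset p \<times> Qset p)"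
  by (auto simp: loop_graph_def)

lemma finite_loop_graph: "finite (loop_graph p)"
  by (simp add: loop_graph_eq_image Qset_def)

lemma card_loop_graph: "card (loop_graph p) = card (Params p)"
proof -
  have "inj_on (\<lambda>(u, v). (u, v, Cop p u v)) (Qset p \<times> Qset p)"
    by (auto simp: inj_on_def)
  then have "card (loop_graph p) = card (Qset p \<times> Qset p)"
    by (simp add: loop_graph_eq_image card_image)
  also have "\<dots> = card (Params p)"
    by (simp add: Qset_def Params_def card_cartesian_product)
  finally show ?thesis .
qed

lemma tau_autotopy:
  assumes "0 < p" "i \<in> Params p"
  shows "tau p i \<in> autotopies (Qset p) (loop_graph p)"
proof (rule autotopy_if_maps_into[OF tau_isotopism(1)[OF assms] finite_loop_graph])
  show "iso_apply (tau p i) ` loop_graph p \<subseteq> loop_graph p"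
  proof
    fix c assume "c \<in> iso_apply (tau p i) ` loop_graph p"
    then obtain u v where c: "c = iso_apply (tau p i) (u, v, Cop p u v)"
      and uv: "u \<in> Qset p" "v \<in> Qset p"
      by (auto simp: loop_graph_def)
    then have "c = (tau1 p i u, tau2 p i v, Cop p (tau1 p i u) (tau2 p i v))"
      using tau_Cop[OF assms(2)] Cop_Qset[OF assms(1)]
      by (simp add: iso_apply_def tau_def extend_id_def)
    then show "c \<in> loop_graph p"
      using tau_Qset[OF assms(1)] uv by (simp add: loop_graph_def)
  qed
qed

lemma tau_orbit_bij:
  assumes "0 < p"
  shows "bij_betw (\<lambda>i. iso_apply (tau p i) ((0, 0), (0, 0), (0, 0))) (Params p) (loop_graph p)"
proof -
  let ?orb = "\<lambda>i. iso_apply (tau p i) ((0, 0), (0, 0), (0, 0))"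
  have base: "((0, 0), (0, 0), (0, 0)) \<in> loop_graph p"
    using assms by (simp add: loop_graph_def Qset_def Cop_def)
  have "?orb ` Params p \<subseteq> loop_graph p"
    using tau_autotopy[OF assms] base by (force simp: autotopies_def)
  moreover have "loop_graph p \<subseteq> ?orb ` Params p"
  proof
    fix b assume "b \<in> loop_graph p"
    then obtain x z y w where b: "b = ((x, z), (y, w), Cop p (x, z) (y, w))"
      and u: "(x, z) \<in> Qset p" and v: "(y, w) \<in> Qset p"
      by (auto simp: loop_graph_def)
    define i where "i = (z, w, x, (y + sgn_bit w * x) mod p)"
    have i: "i \<in> Params p"
      using u v assms by (simp add: i_def Params_def Qset_def)
    have "((y + sgn_bit w * x) mod p - sgn_bit w * x) mod p = y"
      using v by (simp add: mod_diff_left_eq Qset_def)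
    then have "tau1 p i (0, 0) = (x, z)" "tau2 p i (0, 0) = (y, w)"
      using u v by (simp_all add: i_def tau1_def tau2_def Qset_def)
    moreover have "?orb i \<in> loop_graph p"
      using \<open>?orb ` Params p \<subseteq> loop_graph p\<close> i by blast
    ultimately have "?orb i = b"
      using base by (auto simp: b loop_graph_def iso_apply_def tau_def extend_id_def)
    then show "b \<in> ?orb ` Params p" using i by blast
  qed
  ultimately have "?orb ` Params p = loop_graph p" by blast
  then show ?thesis
    by (simp add: bij_betw_def eq_card_imp_inj_on card_loop_graph Params_def)
qed

theorem corollary1:
  fixes p :: int
  assumes "p \<ge> 2"
  shows "topolinear (Qset p) (loop_graph p)"
proof -
  have p: "0 < p" using assms by simp
  let ?H = "tau p ` Params p"
  have unit: "(0, 0, 0, 0) \<in> Params p" using p by (simp add: Params_def)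
  have "bij_betw (\<lambda>h. iso_apply h ((0, 0), (0, 0), (0, 0))) ?H (loop_graph p)"
    using tau_orbit_bij[OF p]
      inj_on_imageI[where f = "tau p" and g = "\<lambda>h. iso_apply h ((0, 0), (0, 0), (0, 0))"]
    by (simp add: bij_betw_def image_image comp_def)
  then show ?thesis
  proof (rule topolinear_if_regular[rotated 5])
    show "?H \<subseteq> autotopies (Qset p) (loop_graph p)" using tau_autotopy[OF p] by blast
    show "(id, id, id) \<in> ?H" using tau_unit unit by (metis image_eqI)
    show "\<forall>s\<in>?H. \<forall>t\<in>?H. iso_comp s t \<in> ?H"
      using tau_comp[OF p] param_mul_Params[OF p] by auto
    show "\<forall>t\<in>?H. iso_inv t \<in> ?H"
      using tau_isotopism(2)[OF p] param_inv_Params[OF p] by auto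
  qed (rule finite_loop_graph)
qed

end
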